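(* Let $\omega:\mathbb N\to[1,\infty)$ be an unbounded weight on $\mathbb N_{\min}$. Then $(\ell^1_\omega(\mathbb N_{\min}),\mathbf T_2)$ is not an AMNM pair.
   Context: $\mathbb N_{\min}$ is the semilattice $\mathbb N$ with product $(m,n)\mapsto\min(m,n)$; every function $\omega:\mathbb N\to[1,\infty)$ is a submultiplicative weight on it. $\ell^1_\omega(\mathbb N_{\min})$ is the Banach space of $a:\mathbb N\to\mathbb C$ with $\|a\|=\sum_n|a(n)|\omega(n)<\infty$, with convolution product $\delta_m*\delta_n=\delta_{\min(m,n)}$. $\mathbf T_2=\{\begin{pmatrix}a&b\\0&a\end{pmatrix}:a,b\in\mathbb C\}$ with norm $|a|+|b|$. For a bounded linear map $T:A\to B$ between Banach algebras, $\operatorname{def}(T)=\sup\{\|T(xy)-T(x)T(y)\|:\|x\|,\|y\|\le1\}$ and $\operatorname{Mult}(A,B)$ is the set of bounded multiplicative linear maps $A\to B$ (including $0$). $(A,B)$ is an AMNM pair if for every $K>0$ and $\varepsilon>0$ there exists $\delta>0$ such that every bounded linear $T:A\to B$ with $\|T\|\le K$ and $\operatorname{def}(T)\le\delta$ satisfies $\operatorname{dist}(T,\operatorname{Mult}(A,B))\le\varepsilon$ in operator norm. *)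

theory Defs
  imports "HOL-Analysis.Analysis"
begin

definition l1w :: "(nat \<Rightarrow> real) \<Rightarrow> (nat \<Rightarrow> complex) set" where
  "l1w \<omega> = {a. summable (\<lambda>n. norm (a n) * \<omega> n)}"

definition wnorm :: "(nat \<Rightarrow> real) \<Rightarrow> (nat \<Rightarrow> complex) \<Rightarrow> real" where
  "wnorm \<omega> a = (\<Sum>n. norm (a n) * \<omega> n)"

text \<open>Convolution with delta_m * delta_n = delta_(min m n):
  (a*b)(k) = sum over min m n = k of a m b n
           = a k * (sum over n \<ge> k of b n) + b k * (sum over m > k of a m).\<close>
definition conv :: "(nat \<Rightarrow> complex) \<Rightarrow> (nat \<Rightarrow> complex) \<Rightarrow> nat \<Rightarrow> complex" where
  "conv a b k = a k * (\<Sum>n. if k \<le> n then b n else 0)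
              + b k * (\<Sum>m. if k < m then a m else 0)"

section \<open>The algebra T_2, represented as pairs (a,b) for the matrix [[a,b],[0,a]]\<close>

definition t2norm :: "complex \<times> complex \<Rightarrow> real" where
  "t2norm x = norm (fst x) + norm (snd x)"

definition t2mult :: "complex \<times> complex \<Rightarrow> complex \<times> complex \<Rightarrow> complex \<times> complex" where
  "t2mult x y = (fst x * fst y, fst x * snd y + snd x * fst y)"

definition t2scale :: "complex \<Rightarrow> complex \<times> complex \<Rightarrow> complex \<times> complex" where
  "t2scale c x = (c * fst x, c * snd x)"

section \<open>Maps l^1_omega(N_min) -> T_2 (only their values on l1w matter)\<close>

definition bdd_lin :: "(nat \<Rightarrow> real) \<Rightarrow> ((nat \<Rightarrow> complex) \<Rightarrow> complex \<times> complex) \<Rightarrow> bool" where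
  "bdd_lin \<omega> T \<longleftrightarrow>
     (\<forall>a\<in>l1w \<omega>. \<forall>b\<in>l1w \<omega>. T (\<lambda>n. a n + b n) = T a + T b) \<and>
     (\<forall>c. \<forall>a\<in>l1w \<omega>. T (\<lambda>n. c * a n) = t2scale c (T a)) \<and>
     (\<exists>C. \<forall>a\<in>l1w \<omega>. t2norm (T a) \<le> C * wnorm \<omega> a)"

definition opnorm :: "(nat \<Rightarrow> real) \<Rightarrow> ((nat \<Rightarrow> complex) \<Rightarrow> complex \<times> complex) \<Rightarrow> real" where
  "opnorm \<omega> T = (SUP a\<in>{a\<in>l1w \<omega>. wnorm \<omega> a \<le> 1}. t2norm (T a))"

definition defect :: "(nat \<Rightarrow> real) \<Rightarrow> ((nat \<Rightarrow> complex) \<Rightarrow> complex \<times> complex) \<Rightarrow> real" where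
  "defect \<omega> T = (SUP p\<in>{(a, b). a \<in> l1w \<omega> \<and> b \<in> l1w \<omega> \<and> wnorm \<omega> a \<le> 1 \<and> wnorm \<omega> b \<le> 1}.
       t2norm (T (conv (fst p) (snd p)) - t2mult (T (fst p)) (T (snd p))))"

definition Mult :: "(nat \<Rightarrow> real) \<Rightarrow> ((nat \<Rightarrow> complex) \<Rightarrow> complex \<times> complex) set" where
  "Mult \<omega> = {S. bdd_lin \<omega> S \<and>
     (\<forall>a\<in>l1w \<omega>. \<forall>b\<in>l1w \<omega>. S (conv a b) = t2mult (S a) (S b))}"

definition dist_mult :: "(nat \<Rightarrow> real) \<Rightarrow> ((nat \<Rightarrow> complex) \<Rightarrow> complex \<times> complex) \<Rightarrow> real" where
  "dist_mult \<omega> T = (INF S\<in>Mult \<omega>. opnorm \<omega> (\<lambda>a. T a - S a))"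

definition AMNM_pair :: "(nat \<Rightarrow> real) \<Rightarrow> bool" where
  "AMNM_pair \<omega> \<longleftrightarrow>
     (\<forall>K>0. \<forall>\<epsilon>>0. \<exists>\<delta>>0. \<forall>T. bdd_lin \<omega> T \<and> opnorm \<omega> T \<le> K \<and> defect \<omega> T \<le> \<delta>
        \<longrightarrow> dist_mult \<omega> T \<le> \<epsilon>)"

end

theory Submission
  imports Defs
begin

(* For N fixed, the tail sum  phi_N(a) = sum_{n >= N} a(n)  is a character
   of l^1_omega(N_min), i.e. multiplicative, and  D_N(a) = omega(N) a(N)  is almost a point
   derivation at phi_N: the only failure of the Leibniz rule is the term  -omega(N) a(N) b(N),
   whose size is at most 1/omega(N) on the unit ball.  Hence  T_N = (phi_N, D_N) : l^1 -> T_2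
   has norm at most 2 and defect at most 1/omega(N), which can be made arbitrarily small
   because omega is unbounded.  On the other hand every multiplicative S maps the idempotent
   delta_N to an idempotent of T_2, whose off-diagonal entry vanishes, while D_N sends
   delta_N / omega(N) (a unit vector) to 1; so T_N stays at distance at least 1 from Mult. *)

section \<open>Tail sums: the characters of the semilattice algebra\<close>

definition tailsum :: "(nat \<Rightarrow> complex) \<Rightarrow> nat \<Rightarrow> complex" where
  "tailsum a k = (\<Sum>n. if k \<le> n then a n else 0)"

lemma conv_tailsum: "conv a b k = a k * tailsum b k + b k * tailsum a (Suc k)"
  unfolding conv_def tailsum_def by (simp add: Suc_le_eq)

lemma summable_tail:
  assumes "summable (\<lambda>n. norm (a n))"
  shows "summable (\<lambda>n. if k \<le> n then a n else (0::complex))"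
  by (rule summable_comparison_test'[OF assms]) auto

lemma summable_norm_tail:
  assumes "summable (\<lambda>n. norm (a n))"
  shows "summable (\<lambda>n. norm (if k \<le> n then a n else (0::complex)))"
  by (rule summable_comparison_test'[OF assms]) auto

lemma tailsum_Suc:
  assumes "summable (\<lambda>n. norm (a n))"
  shows "tailsum a k = a k + tailsum a (Suc k)"
proof -
  have split: "(\<lambda>n. if k \<le> n then a n else 0) =
        (\<lambda>n. (if n = k then a n else 0) + (if Suc k \<le> n then a n else 0))"
    by (rule ext) auto
  have single: "(\<lambda>n. if n = k then a n else 0) sums a k"
    by (rule sums_single)
  show ?thesis
    unfolding tailsum_def split
    using suminf_add[OF sums_summable[OF single] summable_tail[OF assms]] sums_unique[OF single]
    by simp
qed

lemma tailsum_eq_suminf_diff: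
  assumes "summable (\<lambda>n. norm (a n))"
  shows "tailsum a k = suminf a - (\<Sum>i<k. a i)"
proof (induction k)
  case 0
  then show ?case by (simp add: tailsum_def)
next
  case (Suc k)
  then show ?case using tailsum_Suc[OF assms, of k] by (simp add: algebra_simps)
qed

lemma tailsum_tendsto_0:
  assumes "summable (\<lambda>n. norm (a n))"
  shows "tailsum a \<longlonglongrightarrow> 0"
proof -
  have "summable a" using assms summable_norm_cancel by blast
  then have "(\<lambda>k. suminf a - (\<Sum>i<k. a i)) \<longlonglongrightarrow> suminf a - suminf a"
    by (intro tendsto_diff tendsto_const summable_LIMSEQ)
  moreover have "tailsum a = (\<lambda>k. suminf a - (\<Sum>i<k. a i))"
    using tailsum_eq_suminf_diff[OF assms] by (rule ext)
  ultimately show ?thesis by simp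
qed

lemma conv_telescope:
  assumes "summable (\<lambda>n. norm (a n))" "summable (\<lambda>n. norm (b n))"
  shows "conv a b k = tailsum a k * tailsum b k - tailsum a (Suc k) * tailsum b (Suc k)"
  unfolding conv_tailsum tailsum_Suc[OF assms(1), of k] tailsum_Suc[OF assms(2), of k]
  by (simp add: algebra_simps)

lemma tailsum_conv:
  assumes "summable (\<lambda>n. norm (a n))" "summable (\<lambda>n. norm (b n))"
  shows "tailsum (conv a b) N = tailsum a N * tailsum b N"
proof -
  define h where "h n = tailsum a (n + N) * tailsum b (n + N)" for n
  define f where "f n = (if N \<le> n then conv a b n else 0)" for n
  have "(\<lambda>k. tailsum a k * tailsum b k) \<longlonglongrightarrow> 0 * 0"
    by (intro tendsto_mult tailsum_tendsto_0 assms)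
  then have "h \<longlonglongrightarrow> 0"
    unfolding h_def using LIMSEQ_ignore_initial_segment by fastforce
  then have "(\<lambda>n. h n - h (Suc n)) sums (h 0 - 0)"
    by (rule telescope_sums')
  moreover have "(\<lambda>n. h n - h (Suc n)) = (\<lambda>i. f (i + N))"
    by (rule ext) (simp add: f_def h_def conv_telescope[OF assms])
  ultimately have "(\<lambda>i. f (i + N)) sums h 0"
    by simp
  then have "f sums (h 0 + (\<Sum>i<N. f i))"
    by (simp add: sums_iff_shift)
  moreover have "(\<Sum>i<N. f i) = 0"
    by (simp add: f_def)
  ultimately have "f sums h 0"
    by simp
  then show ?thesis unfolding tailsum_def f_def[symmetric] h_def by (simp add: sums_iff)
qed

lemma tailsum_add:
  assumes "summable (\<lambda>n. norm (a n))" "summable (\<lambda>n. norm (b n))"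
  shows "tailsum (\<lambda>n. a n + b n) N = tailsum a N + tailsum b N"
proof -
  have "(\<lambda>n. if N \<le> n then a n + b n else 0) =
        (\<lambda>n. (if N \<le> n then a n else 0) + (if N \<le> n then b n else 0))" by auto
  then show ?thesis
    unfolding tailsum_def using suminf_add[OF summable_tail[OF assms(1)] summable_tail[OF assms(2)]]
    by simp
qed

lemma tailsum_scale:
  assumes "summable (\<lambda>n. norm (a n))"
  shows "tailsum (\<lambda>n. c * a n) N = c * tailsum a N"
proof -
  have "(\<lambda>n. if N \<le> n then c * a n else 0) = (\<lambda>n. c * (if N \<le> n then a n else 0))" by auto
  then show ?thesis
    unfolding tailsum_def using suminf_mult[OF summable_tail[OF assms], of c] by simp
qed

lemma l1w_summable_norm:
  assumes w: "\<And>n. \<omega> n \<ge> 1" and a: "a \<in> l1w \<omega>"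
  shows "summable (\<lambda>n. norm (a n))"
proof (rule summable_comparison_test'[of "\<lambda>n. norm (a n) * \<omega> n"])
  show "summable (\<lambda>n. norm (a n) * \<omega> n)" using a by (simp add: l1w_def)
next
  fix n
  have "norm (a n) * 1 \<le> norm (a n) * \<omega> n" by (rule mult_left_mono) (use w in auto)
  then show "norm (norm (a n)) \<le> norm (a n) * \<omega> n" by simp
qed

lemma weighted_term_nonneg:
  assumes w: "\<And>n. \<omega> n \<ge> 1"
  shows "0 \<le> norm (a n) * \<omega> n"
  using w[of n] by simp

lemma wnorm_nonneg:
  assumes w: "\<And>n. \<omega> n \<ge> 1" and a: "a \<in> l1w \<omega>"
  shows "0 \<le> wnorm \<omega> a"
  unfolding wnorm_def
  by (rule suminf_nonneg) (use a weighted_term_nonneg[OF w] in \<open>auto simp: l1w_def\<close>)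

lemma weighted_term_le_wnorm:
  assumes w: "\<And>n. \<omega> n \<ge> 1" and a: "a \<in> l1w \<omega>"
  shows "norm (a N) * \<omega> N \<le> wnorm \<omega> a"
proof -
  have "(\<Sum>n\<in>{N}. norm (a n) * \<omega> n) \<le> wnorm \<omega> a"
    unfolding wnorm_def
    by (rule sum_le_suminf) (use a weighted_term_nonneg[OF w] in \<open>auto simp: l1w_def\<close>)
  then show ?thesis by simp
qed

lemma norm_tailsum_le_wnorm:
  assumes w: "\<And>n. \<omega> n \<ge> 1" and a: "a \<in> l1w \<omega>"
  shows "norm (tailsum a N) \<le> wnorm \<omega> a"
proof -
  have sn: "summable (\<lambda>n. norm (a n))" by (rule l1w_summable_norm[OF w a])
  have "norm (tailsum a N) \<le> (\<Sum>n. norm (if N \<le> n then a n else 0))"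
    unfolding tailsum_def by (rule summable_norm[OF summable_norm_tail[OF sn]])
  also have "\<dots> \<le> (\<Sum>n. norm (a n) * \<omega> n)"
  proof (rule suminf_le[OF _ summable_norm_tail[OF sn]])
    show "summable (\<lambda>n. norm (a n) * \<omega> n)" using a by (simp add: l1w_def)
  next
    fix n
    have "norm (a n) * 1 \<le> norm (a n) * \<omega> n" by (rule mult_left_mono) (use w in auto)
    then show "norm (if N \<le> n then a n else 0) \<le> norm (a n) * \<omega> n"
      using weighted_term_nonneg[OF w, of a n] by auto
  qed
  finally show ?thesis by (simp add: wnorm_def)
qed

lemma t2norm_diff: "t2norm (x - y) \<le> t2norm x + t2norm y"
  unfolding t2norm_def
  using norm_triangle_ineq4[of "fst x" "fst y"] norm_triangle_ineq4[of "snd x" "snd y"]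
  by simp

text \<open>The unit ball is nonempty, so the suprema defining opnorm and defect are over nonempty sets.\<close>
lemma zero_in_unit_ball: "(\<lambda>n. 0) \<in> {a \<in> l1w \<omega>. wnorm \<omega> a \<le> 1}"
  by (simp add: l1w_def wnorm_def)

lemma opnorm_le:
  assumes "\<And>a. a \<in> l1w \<omega> \<Longrightarrow> wnorm \<omega> a \<le> 1 \<Longrightarrow> t2norm (T a) \<le> c"
  shows "opnorm \<omega> T \<le> c"
  unfolding opnorm_def
  by (rule cSUP_least) (use zero_in_unit_ball assms in auto)

lemma norm_le_opnorm:
  assumes w: "\<And>n. \<omega> n \<ge> 1"
    and bounded: "\<And>a. a \<in> l1w \<omega> \<Longrightarrow> t2norm (T a) \<le> C * wnorm \<omega> a"
    and a: "a \<in> l1w \<omega>" "wnorm \<omega> a \<le> 1"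
  shows "t2norm (T a) \<le> opnorm \<omega> T"
  unfolding opnorm_def
proof (rule cSUP_upper)
  show "bdd_above ((\<lambda>a. t2norm (T a)) ` {a \<in> l1w \<omega>. wnorm \<omega> a \<le> 1})"
  proof (rule bdd_aboveI2)
    fix x assume "x \<in> {a \<in> l1w \<omega>. wnorm \<omega> a \<le> 1}"
    then have x: "x \<in> l1w \<omega>" "wnorm \<omega> x \<le> 1" by auto
    have "t2norm (T x) \<le> max C 0 * wnorm \<omega> x"
      using bounded[OF x(1)] wnorm_nonneg[OF w x(1)] mult_right_mono[of C "max C 0"]
      by (meson max.cobounded1 order_trans)
    also have "\<dots> \<le> max C 0"
      using x(2) mult_left_mono[of "wnorm \<omega> x" 1 "max C 0"] by simp
    finally show "t2norm (T x) \<le> max C 0" .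
  qed
qed (use a in auto)

lemma defect_le:
  assumes "\<And>a b. a \<in> l1w \<omega> \<Longrightarrow> b \<in> l1w \<omega> \<Longrightarrow> wnorm \<omega> a \<le> 1 \<Longrightarrow> wnorm \<omega> b \<le> 1 \<Longrightarrow>
             t2norm (T (conv a b) - t2mult (T a) (T b)) \<le> c"
  shows "defect \<omega> T \<le> c"
  unfolding defect_def
proof (rule cSUP_least)
  show "{(a, b). a \<in> l1w \<omega> \<and> b \<in> l1w \<omega> \<and> wnorm \<omega> a \<le> 1 \<and> wnorm \<omega> b \<le> 1} \<noteq> {}"
    using zero_in_unit_ball by blast
qed (use assms in auto)

section \<open>The almost multiplicative maps: a character plus a near-derivation\<close>

definition pert_char :: "(nat \<Rightarrow> real) \<Rightarrow> nat \<Rightarrow> (nat \<Rightarrow> complex) \<Rightarrow> complex \<times> complex" where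
  "pert_char \<omega> N a = (tailsum a N, complex_of_real (\<omega> N) * a N)"

lemma pert_char_bound:
  assumes w: "\<And>n. \<omega> n \<ge> 1" and a: "a \<in> l1w \<omega>"
  shows "t2norm (pert_char \<omega> N a) \<le> 2 * wnorm \<omega> a"
proof -
  have "norm (complex_of_real (\<omega> N) * a N) = norm (a N) * \<omega> N"
    using w[of N] by (simp add: norm_mult)
  then show ?thesis
    using weighted_term_le_wnorm[OF w a, of N] norm_tailsum_le_wnorm[OF w a, of N]
    by (simp add: t2norm_def pert_char_def)
qed

lemma pert_char_bdd_lin:
  assumes w: "\<And>n. \<omega> n \<ge> 1"
  shows "bdd_lin \<omega> (pert_char \<omega> N)"
  unfolding bdd_lin_def
proof (intro conjI ballI allI exI)
  fix a b assume "a \<in> l1w \<omega>" "b \<in> l1w \<omega>"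
  then show "pert_char \<omega> N (\<lambda>n. a n + b n) = pert_char \<omega> N a + pert_char \<omega> N b"
    by (simp add: pert_char_def tailsum_add l1w_summable_norm[OF w] algebra_simps)
next
  fix c :: complex and a assume "a \<in> l1w \<omega>"
  then show "pert_char \<omega> N (\<lambda>n. c * a n) = t2scale c (pert_char \<omega> N a)"
    by (simp add: pert_char_def t2scale_def tailsum_scale l1w_summable_norm[OF w])
next
  fix a assume "a \<in> l1w \<omega>"
  then show "t2norm (pert_char \<omega> N a) \<le> 2 * wnorm \<omega> a" by (rule pert_char_bound[OF w])
qed

lemma pert_char_opnorm:
  assumes w: "\<And>n. \<omega> n \<ge> 1"
  shows "opnorm \<omega> (pert_char \<omega> N) \<le> 2"
proof (rule opnorm_le)
  fix a assume "a \<in> l1w \<omega>" "wnorm \<omega> a \<le> 1"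
  then show "t2norm (pert_char \<omega> N a) \<le> 2"
    using pert_char_bound[of \<omega> a N, OF w] by linarith
qed

lemma pert_char_defect_term:
  assumes w: "\<And>n. \<omega> n \<ge> 1" and a: "a \<in> l1w \<omega>" and b: "b \<in> l1w \<omega>"
  shows "pert_char \<omega> N (conv a b) - t2mult (pert_char \<omega> N a) (pert_char \<omega> N b)
         = (0, - (complex_of_real (\<omega> N) * a N * b N))"
proof -
  have sa: "summable (\<lambda>n. norm (a n))" and sb: "summable (\<lambda>n. norm (b n))"
    using l1w_summable_norm[OF w] a b by auto
  show ?thesis
    by (simp add: pert_char_def t2mult_def tailsum_conv[OF sa sb] conv_tailsum
        tailsum_Suc[OF sa, of N] algebra_simps)
qed

lemma pert_char_defect:
  assumes w: "\<And>n. \<omega> n \<ge> 1"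
  shows "defect \<omega> (pert_char \<omega> N) \<le> 1 / \<omega> N"
proof (rule defect_le)
  fix a b assume a: "a \<in> l1w \<omega>" and b: "b \<in> l1w \<omega>"
    and na: "wnorm \<omega> a \<le> 1" and nb: "wnorm \<omega> b \<le> 1"
  define W where "W = \<omega> N"
  have W1: "W \<ge> 1" using w by (simp add: W_def)
  have "(norm (a N) * W) * (norm (b N) * W) \<le> 1 * 1"
    using weighted_term_le_wnorm[OF w a, of N] weighted_term_le_wnorm[OF w b, of N] na nb W1
    by (intro mult_mono) (auto simp: W_def)
  then have "W * (norm (a N) * norm (b N)) \<le> 1 / W"
    using W1 by (simp add: field_simps)
  then show "t2norm (pert_char \<omega> N (conv a b) - t2mult (pert_char \<omega> N a) (pert_char \<omega> N b))
             \<le> 1 / \<omega> N"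
    unfolding pert_char_defect_term[OF w a b] t2norm_def W_def[symmetric] using W1
    by (simp add: norm_mult)
qed

section \<open>Multiplicative maps stay far from these maps\<close>

lemma t2_idempotent_snd:
  assumes "t2mult x x = x"
  shows "snd x = 0"
proof -
  have h1: "fst x * fst x = fst x" and h2: "fst x * snd x + snd x * fst x = snd x"
    using assms unfolding t2mult_def by (metis fst_conv, metis snd_conv)
  from h1 have "fst x = 0 \<or> fst x = 1" by (metis mult_cancel_left1)
  then show ?thesis using h2 by auto
qed

definition unit_vec :: "nat \<Rightarrow> nat \<Rightarrow> complex" where
  "unit_vec N n = (if n = N then 1 else 0)"

lemma unit_vec_in_l1w: "unit_vec N \<in> l1w \<omega>"
proof -
  have "(\<lambda>n. norm (unit_vec N n) * \<omega> n) = (\<lambda>n. if n = N then \<omega> n else 0)"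
    by (rule ext) (simp add: unit_vec_def)
  then show ?thesis
    unfolding l1w_def using sums_summable[OF sums_single[of N \<omega>]] by simp
qed

lemma tailsum_unit_vec: "tailsum (unit_vec N) k = (if k \<le> N then 1 else 0)"
proof -
  have "(\<lambda>n. if k \<le> n then unit_vec N n else 0) =
        (\<lambda>n. if n = N then (if k \<le> N then 1 else 0) else 0)"
    by (rule ext) (auto simp: unit_vec_def)
  then show ?thesis
    unfolding tailsum_def using sums_unique[OF sums_single[of N "\<lambda>_. if k \<le> N then 1 else (0::complex)"]]
    by simp
qed

lemma conv_unit_vec: "conv (unit_vec N) (unit_vec N) = unit_vec N"
  by (rule ext) (simp add: conv_tailsum tailsum_unit_vec unit_vec_def)

lemma Mult_unit_vec_snd:
  assumes "S \<in> Mult \<omega>"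
  shows "snd (S (unit_vec N)) = 0"
proof (rule t2_idempotent_snd)
  have "S (conv (unit_vec N) (unit_vec N)) = t2mult (S (unit_vec N)) (S (unit_vec N))"
    using assms unit_vec_in_l1w by (auto simp: Mult_def)
  then show "t2mult (S (unit_vec N)) (S (unit_vec N)) = S (unit_vec N)"
    by (simp add: conv_unit_vec)
qed

text \<open>Testing T_N - S on the unit vector delta_N / omega(N) gives distance at least 1.\<close>
lemma pert_char_far_from_Mult:
  assumes w: "\<And>n. \<omega> n \<ge> 1" and S: "S \<in> Mult \<omega>"
  shows "1 \<le> opnorm \<omega> (\<lambda>a. pert_char \<omega> N a - S a)"
proof -
  have W1: "\<omega> N \<ge> 1" by (rule w)
  define c :: complex where "c = complex_of_real (1 / \<omega> N)"
  define u where "u n = c * unit_vec N n" for n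
  have weighted_u: "(\<lambda>n. norm (u n) * \<omega> n) = (\<lambda>n. if n = N then 1 else 0)"
    by (rule ext) (use W1 in \<open>simp add: u_def unit_vec_def c_def norm_mult norm_divide\<close>)
  have "(\<lambda>n. norm (u n) * \<omega> n) sums 1"
    unfolding weighted_u using sums_single[of N "\<lambda>_. 1::real"] by simp
  then have u: "u \<in> l1w \<omega>" "wnorm \<omega> u \<le> 1"
    unfolding l1w_def wnorm_def by (auto simp: sums_iff)
  have linS: "bdd_lin \<omega> S" using S by (simp add: Mult_def)
  then obtain C where C: "\<forall>a\<in>l1w \<omega>. t2norm (S a) \<le> C * wnorm \<omega> a"
    unfolding bdd_lin_def by blast
  have Su: "S u = t2scale c (S (unit_vec N))"
    using linS unit_vec_in_l1w unfolding bdd_lin_def u_def by blast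
  have "snd (pert_char \<omega> N u) = 1"
    using W1 by (simp add: pert_char_def u_def unit_vec_def c_def)
  then have "1 \<le> t2norm (pert_char \<omega> N u - S u)"
    unfolding t2norm_def using Su Mult_unit_vec_snd[OF S] by (simp add: t2scale_def)
  also have "\<dots> \<le> opnorm \<omega> (\<lambda>a. pert_char \<omega> N a - S a)"
  proof (rule norm_le_opnorm[OF w _ u])
    fix a assume a: "a \<in> l1w \<omega>"
    have "t2norm (S a) \<le> C * wnorm \<omega> a" using C a by blast
    then show "t2norm (pert_char \<omega> N a - S a) \<le> (2 + C) * wnorm \<omega> a"
      unfolding distrib_right
      using t2norm_diff[of "pert_char \<omega> N a" "S a"] pert_char_bound[of \<omega> a N, OF w a]
      by linarith
  qed
  finally show ?thesis .
qed

text \<open>Mult is nonempty, so the infimum defining dist_mult is over a nonempty set.\<close>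
lemma zero_in_Mult: "(\<lambda>a. 0) \<in> Mult \<omega>"
  unfolding Mult_def bdd_lin_def
  by (auto simp: t2scale_def t2mult_def t2norm_def zero_prod_def intro: exI[of _ 0])

lemma not_AMNM_pairI:
  assumes "\<And>\<delta>. \<delta> > 0 \<Longrightarrow> \<exists>T. bdd_lin \<omega> T \<and> opnorm \<omega> T \<le> K \<and> defect \<omega> T \<le> \<delta> \<and>
             (\<forall>S\<in>Mult \<omega>. 1 \<le> opnorm \<omega> (\<lambda>a. T a - S a))"
    and "K > 0"
  shows "\<not> AMNM_pair \<omega>"
proof
  assume "AMNM_pair \<omega>"
  then obtain \<delta> where "\<delta> > 0" and small: "\<And>T. bdd_lin \<omega> T \<and> opnorm \<omega> T \<le> K \<and> defect \<omega> T \<le> \<delta>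
        \<Longrightarrow> dist_mult \<omega> T \<le> 1/2"
    using \<open>K > 0\<close> unfolding AMNM_pair_def by (meson half_gt_zero zero_less_one)
  then obtain T where T: "bdd_lin \<omega> T" "opnorm \<omega> T \<le> K" "defect \<omega> T \<le> \<delta>"
    and far: "\<forall>S\<in>Mult \<omega>. 1 \<le> opnorm \<omega> (\<lambda>a. T a - S a)"
    using assms(1) by blast
  have "dist_mult \<omega> T \<le> 1/2"
    using small T by blast
  moreover have "1 \<le> dist_mult \<omega> T"
    unfolding dist_mult_def by (rule cINF_greatest) (use zero_in_Mult far in blast)+
  ultimately show False by simp
qed

theorem theoremt:
  fixes \<omega> :: "nat \<Rightarrow> real"
  assumes "\<And>n. \<omega> n \<ge> 1"
    and "\<not> bdd_above (range \<omega>)"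
  shows "\<not> AMNM_pair \<omega>"
proof (rule not_AMNM_pairI[where K = 2])
  fix \<delta> :: real assume "\<delta> > 0"
  obtain N where N: "\<omega> N > 1 / \<delta>"
    using assms(2) by (metis bdd_aboveI2 not_le rangeI)
  then have "1 / \<omega> N < \<delta>"
    using \<open>\<delta> > 0\<close> assms(1)[of N] by (simp add: field_simps)
  then show "\<exists>T. bdd_lin \<omega> T \<and> opnorm \<omega> T \<le> 2 \<and> defect \<omega> T \<le> \<delta> \<and>
             (\<forall>S\<in>Mult \<omega>. 1 \<le> opnorm \<omega> (\<lambda>a. T a - S a))"
    using pert_char_bdd_lin[of \<omega> N] pert_char_opnorm[of \<omega> N] pert_char_defect[of \<omega> N]
      pert_char_far_from_Mult[of \<omega> _ N] assms(1)
    by (intro exI[of _ "pert_char \<omega> N"]) force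
qed simp

end
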